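(* If a graph $G$ contains a strongly $1$-shallow $K_t$-minor, then $h_o(G)\geq t$.
   Context: A $K_t$-minor of a graph $G$ is given by $t$ pairwise vertex-disjoint connected subgraphs (bags) of $G$, any two of which are joined by an edge of $G$. A star is $K_{1,s}$ for some $s\ge1$. A $K_t$-minor is strongly $1$-shallow if each bag is either a single vertex or a star, and for every two bags there is a connecting edge of $G$ each of whose endpoints is either the unique vertex of a single-vertex bag or a leaf vertex of a star bag. A signed graph $(G,\sigma)$ is a graph with a map $\sigma:E(G)\to\{+,-\}$. Switching at a vertex $x$ changes the sign of every edge incident with $x$; this generates switching equivalence. $(H,\pi)$ is a minor of $(G,\sigma)$ if there exist a signature $\tau$ switching equivalent to $\sigma$ and pairwise vertex-disjoint subgraphs $B_x$ of $G$ ($x\in V(H)$) such that (i) the positive edges of each $B_x$ under $\tau$ form a connected spanning subgraph of $B_x$, and (ii) for each edge $xy$ of $H$ there is an edge $uv$ of $G$ with $u\in V(B_x)$, $v\in V(B_y)$ and $\tau(uv)=\pi(xy)$. $(G,-)$ denotes $G$ with all edges negative. The odd Hadwiger number $h_o(G)$ is the largest $t$ such that $(K_t,-)$ is a minor of $(G,-)$. *)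

theory Defs
  imports Main
begin

definition graph :: "'a set \<Rightarrow> 'a set set \<Rightarrow> bool" where
  "graph V E \<longleftrightarrow> finite V \<and>
     (\<forall>e\<in>E. \<exists>u v. e = {u, v} \<and> u \<noteq> v \<and> u \<in> V \<and> v \<in> V)"

definition subgraph :: "'a set \<Rightarrow> 'a set set \<Rightarrow> 'a set \<Rightarrow> 'a set set \<Rightarrow> bool" where
  "subgraph W F V E \<longleftrightarrow> W \<subseteq> V \<and> F \<subseteq> E \<and> (\<forall>e\<in>F. e \<subseteq> W)"

definition connected_graph :: "'a set \<Rightarrow> 'a set set \<Rightarrow> bool" where
  "connected_graph W F \<longleftrightarrow> W \<noteq> {} \<and>
     (\<forall>u\<in>W. \<forall>v\<in>W. (\<lambda>x y. {x, y} \<in> F)\<^sup>*\<^sup>* u v)"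

definition Kt_vertices :: "nat \<Rightarrow> nat set" where
  "Kt_vertices t = {0..<t}"

definition Kt_edges :: "nat \<Rightarrow> nat set set" where
  "Kt_edges t = {{i, j} | i j. i < t \<and> j < t \<and> i \<noteq> j}"

text \<open>Signatures: True = positive, False = negative.  Switching at vertex x.\<close>
definition switch_at :: "'a \<Rightarrow> ('a set \<Rightarrow> bool) \<Rightarrow> ('a set \<Rightarrow> bool)" where
  "switch_at x \<sigma> = (\<lambda>e. if x \<in> e then \<not> \<sigma> e else \<sigma> e)"

definition switching_equiv :: "'a set \<Rightarrow> ('a set \<Rightarrow> bool) \<Rightarrow> ('a set \<Rightarrow> bool) \<Rightarrow> bool" where
  "switching_equiv V \<sigma> \<tau> \<longleftrightarrow> (\<lambda>\<rho> \<rho>'. \<exists>x\<in>V. \<rho>' = switch_at x \<rho>)\<^sup>*\<^sup>* \<sigma> \<tau>"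

definition signed_minor ::
  "'b set \<Rightarrow> 'b set set \<Rightarrow> ('b set \<Rightarrow> bool) \<Rightarrow> 'a set \<Rightarrow> 'a set set \<Rightarrow> ('a set \<Rightarrow> bool) \<Rightarrow> bool" where
  "signed_minor VH EH \<pi> V E \<sigma> \<longleftrightarrow>
     (\<exists>\<tau> (BV :: 'b \<Rightarrow> 'a set) (BE :: 'b \<Rightarrow> 'a set set).
        switching_equiv V \<sigma> \<tau> \<and>
        (\<forall>x\<in>VH. subgraph (BV x) (BE x) V E) \<and>
        (\<forall>x\<in>VH. \<forall>y\<in>VH. x \<noteq> y \<longrightarrow> BV x \<inter> BV y = {}) \<and>
        (\<forall>x\<in>VH. connected_graph (BV x) {e \<in> BE x. \<tau> e}) \<and>
        (\<forall>x y. {x, y} \<in> EH \<longrightarrow>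
           (\<exists>u\<in>BV x. \<exists>v\<in>BV y. {u, v} \<in> E \<and> \<tau> {u, v} = \<pi> {x, y})))"

definition odd_hadwiger :: "'a set \<Rightarrow> 'a set set \<Rightarrow> nat" where
  "odd_hadwiger V E =
     Max {t. signed_minor (Kt_vertices t) (Kt_edges t) (\<lambda>_. False) V E (\<lambda>_. False)}"

text \<open>Bag i is given by a centre c i and a set of leaves L i:
  if L i = {} the bag is the single vertex c i, otherwise it is the star with centre c i
  and leaves L i (edges {c i, l}).  The admissible endpoints ("ports") of bag i are
  its unique vertex if single, else its leaves.\<close>
definition ports :: "'a \<Rightarrow> 'a set \<Rightarrow> 'a set" where
  "ports c L = (if L = {} then {c} else L)"

definition strongly_1_shallow_Kt_minor :: "'a set \<Rightarrow> 'a set set \<Rightarrow> nat \<Rightarrow> bool" where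
  "strongly_1_shallow_Kt_minor V E t \<longleftrightarrow>
     (\<exists>(c :: nat \<Rightarrow> 'a) (L :: nat \<Rightarrow> 'a set).
        (\<forall>i<t. c i \<in> V \<and> L i \<subseteq> V \<and> finite (L i) \<and> c i \<notin> L i \<and>
               (\<forall>l\<in>L i. {c i, l} \<in> E)) \<and>
        (\<forall>i<t. \<forall>j<t. i \<noteq> j \<longrightarrow> insert (c i) (L i) \<inter> insert (c j) (L j) = {}) \<and>
        (\<forall>i<t. \<forall>j<t. i \<noteq> j \<longrightarrow>
           (\<exists>u\<in>ports (c i) (L i). \<exists>v\<in>ports (c j) (L j). {u, v} \<in> E)))"

end

theory Submission
  imports Defs
begin

text \<open>Switch at the centre of every bag that is a genuine star.  Each centre--leaf edge then
  has exactly one switched endpoint and becomes positive, so every bag is spanned by positive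
  edges; the connecting edges of the minor join single vertices and leaves, none of which is
  switched, so they stay negative.\<close>

lemma foldr_switch_at_eq:
  assumes "distinct xs"
  shows "foldr switch_at xs \<sigma> e = (\<sigma> e \<noteq> odd (card (set xs \<inter> e)))"
  using assms
proof (induction xs)
  case (Cons x xs)
  then have "card (set (x # xs) \<inter> e) =
      (if x \<in> e then Suc (card (set xs \<inter> e)) else card (set xs \<inter> e))"
    by (simp add: Int_insert_left)
  with Cons show ?case by (simp add: switch_at_def)
qed simp

lemma switching_equiv_foldr_switch_at:
  assumes "set xs \<subseteq> V"
  shows "switching_equiv V \<sigma> (foldr switch_at xs \<sigma>)"
  using assms
proof (induction xs)
  case Nil
  then show ?case by (simp add: switching_equiv_def)
next
  case (Cons x xs)
  then have "switching_equiv V \<sigma> (foldr switch_at xs \<sigma>)" by simp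
  with Cons.prems show ?case
    unfolding switching_equiv_def by (auto intro: rtranclp.rtrancl_into_rtrancl)
qed

lemma switching_equiv_switch_set:
  assumes "finite S" "S \<subseteq> V"
  shows "switching_equiv V \<sigma> (\<lambda>e. \<sigma> e \<noteq> odd (card (S \<inter> e)))"
proof -
  obtain xs where xs: "set xs = S" "distinct xs"
    using finite_distinct_list[OF assms(1)] by blast
  then have "foldr switch_at xs \<sigma> = (\<lambda>e. \<sigma> e \<noteq> odd (card (S \<inter> e)))"
    by (auto simp: foldr_switch_at_eq)
  with switching_equiv_foldr_switch_at[of xs V \<sigma>] xs assms(2) show ?thesis by simp
qed

lemma connected_graph_star: "connected_graph (insert c L) {{c, l} | l. l \<in> L}"
proof -
  let ?R = "\<lambda>a b. {a, b} \<in> {{c, l} | l. l \<in> L}"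
  have "?R u c \<and> ?R c u" if "u \<in> L" for u
    using that by (auto simp: insert_commute)
  then have "?R\<^sup>*\<^sup>* u c \<and> ?R\<^sup>*\<^sup>* c u" if "u \<in> insert c L" for u
    using that by auto
  then show ?thesis
    unfolding connected_graph_def by (blast intro: rtranclp_trans)
qed

lemma signed_minor_Kt_le_card:
  assumes "finite V" "signed_minor (Kt_vertices s) (Kt_edges s) \<pi> V E \<sigma>"
  shows "s \<le> card V"
proof -
  obtain \<tau> BV BE where
    sub: "\<forall>x\<in>Kt_vertices s. subgraph (BV x) (BE x) V E" and
    dis: "\<forall>x\<in>Kt_vertices s. \<forall>y\<in>Kt_vertices s. x \<noteq> y \<longrightarrow> BV x \<inter> BV y = {}" and
    con: "\<forall>x\<in>Kt_vertices s. connected_graph (BV x) {e \<in> BE x. \<tau> e}"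
    using assms(2) unfolding signed_minor_def by blast
  have "\<forall>i\<in>{0..<s}. \<exists>v. v \<in> BV i"
    using con unfolding connected_graph_def Kt_vertices_def by blast
  then obtain f where f: "\<And>i. i < s \<Longrightarrow> f i \<in> BV i"
    by (metis atLeastLessThan_iff zero_le)
  have "inj_on f {0..<s}"
    using f dis unfolding inj_on_def Kt_vertices_def by (metis IntI atLeastLessThan_iff empty_iff)
  moreover have "f ` {0..<s} \<subseteq> V"
    using f sub unfolding subgraph_def Kt_vertices_def by fastforce
  ultimately show ?thesis
    using card_inj_on_le[OF _ _ assms(1)] by fastforce
qed

lemma odd_hadwiger_ge:
  assumes "finite V" "signed_minor (Kt_vertices t) (Kt_edges t) (\<lambda>_. False) V E (\<lambda>_. False)"
  shows "t \<le> odd_hadwiger V E"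
  unfolding odd_hadwiger_def
proof (rule Max_ge)
  show "finite {t. signed_minor (Kt_vertices t) (Kt_edges t) (\<lambda>_. False) V E (\<lambda>_. False)}"
    by (rule finite_subset[of _ "{..card V}"])
      (use signed_minor_Kt_le_card[OF assms(1)] in auto)
qed (use assms(2) in simp)

locale strongly_1_shallow_Kt_model =
  fixes V :: "'a set" and E :: "'a set set" and t :: nat
    and c :: "nat \<Rightarrow> 'a" and L :: "nat \<Rightarrow> 'a set"
  assumes bag: "\<And>i. i < t \<Longrightarrow> c i \<in> V \<and> L i \<subseteq> V \<and> finite (L i) \<and> c i \<notin> L i \<and>
                  (\<forall>l\<in>L i. {c i, l} \<in> E)"
    and bags_disjoint: "\<And>i j. i < t \<Longrightarrow> j < t \<Longrightarrow> i \<noteq> j \<Longrightarrow>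
                  insert (c i) (L i) \<inter> insert (c j) (L j) = {}"
    and bags_adjacent: "\<And>i j. i < t \<Longrightarrow> j < t \<Longrightarrow> i \<noteq> j \<Longrightarrow>
                  \<exists>u\<in>ports (c i) (L i). \<exists>v\<in>ports (c j) (L j). {u, v} \<in> E"
begin

definition star_centres :: "'a set" where
  "star_centres = c ` {i. i < t \<and> L i \<noteq> {}}"

definition switched :: "'a set \<Rightarrow> bool" where
  "switched e \<longleftrightarrow> odd (card (star_centres \<inter> e))"

lemma switching_equiv_switched: "switching_equiv V (\<lambda>_. False) switched"
proof -
  have "finite star_centres" "star_centres \<subseteq> V"
    using bag by (auto simp: star_centres_def)
  from switching_equiv_switch_set[OF this, of "\<lambda>_. False"] show ?thesis
    by (simp add: switched_def[abs_def])
qed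

lemma leaf_notin_star_centres:
  assumes "i < t" "l \<in> L i"
  shows "l \<notin> star_centres"
proof
  assume "l \<in> star_centres"
  then obtain j where "j < t" "L j \<noteq> {}" "l = c j"
    by (auto simp: star_centres_def)
  with assms bag bags_disjoint[of i j] show False
    by (cases "i = j") auto
qed

lemma port_notin_star_centres:
  assumes "i < t" "u \<in> ports (c i) (L i)"
  shows "u \<notin> star_centres"
proof (cases "L i = {}")
  case True
  show ?thesis
  proof
    assume "u \<in> star_centres"
    then obtain j where "j < t" "L j \<noteq> {}" "u = c j"
      by (auto simp: star_centres_def)
    with assms True bags_disjoint[of i j] show False
      by (cases "i = j") (auto simp: ports_def)
  qed
next
  case False
  with assms leaf_notin_star_centres show ?thesis
    by (simp add: ports_def)
qed

lemma switched_star_edge: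
  assumes "i < t" "l \<in> L i"
  shows "switched {c i, l}"
proof -
  have "c i \<in> star_centres"
    using assms by (auto simp: star_centres_def)
  with leaf_notin_star_centres[OF assms] have "star_centres \<inter> {c i, l} = {c i}"
    by auto
  then show ?thesis
    by (simp add: switched_def)
qed

lemma not_switched_port_edge:
  assumes "i < t" "j < t" "u \<in> ports (c i) (L i)" "v \<in> ports (c j) (L j)"
  shows "\<not> switched {u, v}"
proof -
  have "star_centres \<inter> {u, v} = {}"
    using port_notin_star_centres assms by auto
  then show ?thesis
    by (simp add: switched_def)
qed

lemma odd_Kt_minor: "signed_minor (Kt_vertices t) (Kt_edges t) (\<lambda>_. False) V E (\<lambda>_. False)"
  unfolding signed_minor_def
proof (intro exI conjI ballI allI impI)
  let ?BV = "\<lambda>i. insert (c i) (L i)" and ?BE = "\<lambda>i. {{c i, l} | l. l \<in> L i}"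
  show "switching_equiv V (\<lambda>_. False) switched"
    by (rule switching_equiv_switched)
  fix x y
  assume "x \<in> Kt_vertices t"
  then have x: "x < t"
    by (simp add: Kt_vertices_def)
  show "subgraph (?BV x) (?BE x) V E"
    using bag[OF x] unfolding subgraph_def by auto
  have "{e \<in> ?BE x. switched e} = ?BE x"
    using switched_star_edge[OF x] by auto
  then show "connected_graph (?BV x) {e \<in> ?BE x. switched e}"
    by (simp add: connected_graph_star)
  assume "y \<in> Kt_vertices t" "x \<noteq> y"
  then show "?BV x \<inter> ?BV y = {}"
    using bags_disjoint x by (simp add: Kt_vertices_def)
next
  fix x y
  assume "{x, y} \<in> Kt_edges t"
  then have xy: "x < t" "y < t" "x \<noteq> y"
    unfolding Kt_edges_def by (auto simp: doubleton_eq_iff)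
  then obtain u v where uv: "u \<in> ports (c x) (L x)" "v \<in> ports (c y) (L y)" "{u, v} \<in> E"
    using bags_adjacent by blast
  moreover have "u \<in> insert (c x) (L x)" "v \<in> insert (c y) (L y)"
    using uv by (auto simp: ports_def split: if_splits)
  ultimately show "\<exists>u\<in>insert (c x) (L x). \<exists>v\<in>insert (c y) (L y).
      {u, v} \<in> E \<and> switched {u, v} = False"
    using not_switched_port_edge[OF xy(1,2) uv(1,2)] by auto
qed

end

theorem lemma2p1:
  fixes V :: "'a set" and E :: "'a set set" and t :: nat
  assumes "graph V E"
    and "strongly_1_shallow_Kt_minor V E t"
  shows "odd_hadwiger V E \<ge> t"
proof -
  obtain c L where
    "\<forall>i<t. c i \<in> V \<and> L i \<subseteq> V \<and> finite (L i) \<and> c i \<notin> L i \<and> (\<forall>l\<in>L i. {c i, l} \<in> E)"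
    "\<forall>i<t. \<forall>j<t. i \<noteq> j \<longrightarrow> insert (c i) (L i) \<inter> insert (c j) (L j) = {}"
    "\<forall>i<t. \<forall>j<t. i \<noteq> j \<longrightarrow> (\<exists>u\<in>ports (c i) (L i). \<exists>v\<in>ports (c j) (L j). {u, v} \<in> E)"
    using assms(2) unfolding strongly_1_shallow_Kt_minor_def by blast
  then interpret strongly_1_shallow_Kt_model V E t c L
    by unfold_locales simp_all
  have "finite V"
    using assms(1) by (simp add: graph_def)
  from odd_hadwiger_ge[OF this odd_Kt_minor] show ?thesis .
qed

end
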